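(* Let $G_t(x,y)=\sum_{j\ge0}e^{-\lambda_j^2t}\phi_j(x)\phi_j(y)$ and $\Delta G_t(x,y)=-\sum_{j\ge0}\lambda_je^{-\lambda_j^2t}\phi_j(x)\phi_j(y)$ for $t>0$, $x,y\in\mathcal O$. Then for all $t>0$ and $x,z\in\mathcal O$, $$\int_{\mathcal O}|G_t(x,y)-G_t(z,y)|^2\,dy\le e^{-\lambda_1t}\sum_{j\ge0}\lambda_je^{-\lambda_j^2t}\,|x-z|^2,$$ and for every $\alpha\in(0,1)$ there is $C>0$ such that for all $t>0$, $x,z\in\mathcal O$, $$\int_{\mathcal O}|\Delta G_t(x,y)-\Delta G_t(z,y)|\,dy\le Ce^{-\frac{\lambda_1}{2}t}|x-z|^{\alpha}\Big(\sum_{j\ge0}\lambda_j^{2+\alpha}e^{-\lambda_j^2t}\Big)^{1/2}.$$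
   Context: $\mathcal O=(0,\pi)$; $\phi_0\equiv\pi^{-1/2}$, $\phi_j(x)=\sqrt{2/\pi}\cos(jx)$ for $j\ge1$, $\lambda_j=j^2$ (eigenpairs of the Neumann Laplacian on $\mathcal O$). *)

theory Defs
  imports "HOL-Analysis.Analysis"
begin

definition Odom :: "real set" where
  "Odom = {0<..<pi}"

text \<open>Neumann eigenfunctions on (0, pi).\<close>
definition phi :: "nat \<Rightarrow> real \<Rightarrow> real" where
  "phi j x = (if j = 0 then 1 / sqrt pi else sqrt (2 / pi) * cos (real j * x))"

definition lam :: "nat \<Rightarrow> real" where
  "lam j = (real j) ^ 2"

definition G :: "real \<Rightarrow> real \<Rightarrow> real \<Rightarrow> real" where
  "G t x y = (\<Sum>j. exp (- ((lam j)\<^sup>2 * t)) * phi j x * phi j y)"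

definition DeltaG :: "real \<Rightarrow> real \<Rightarrow> real \<Rightarrow> real" where
  "DeltaG t x y = - (\<Sum>j. lam j * exp (- ((lam j)\<^sup>2 * t)) * phi j x * phi j y)"

end

theory Submission
  imports Defs "HOL-Real_Asymp.Real_Asymp"
begin

text \<open>
  In the orthonormal basis \<open>phi j\<close> of \<open>L\<^sup>2(0, pi)\<close>, the difference of a kernel
  \<open>\<Sum>j. w j * phi j x * phi j y\<close> at \<open>x\<close> and at \<open>z\<close> has the coefficients
  \<open>w j * (phi j x - phi j z)\<close>, so by Parseval its squared \<open>L\<^sup>2\<close> norm in \<open>y\<close> is the sum of
  their squares. The term \<open>j = 0\<close> vanishes since \<open>phi 0\<close> is constant; for \<open>j \<ge> 1\<close> one factor
  \<open>exp (- (lam j)\<^sup>2 * t)\<close> is at most \<open>exp (- lam 1 * t)\<close>, and \<open>\<bar>phi j x - phi j z\<bar>\<close> is bounded by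
  \<open>j * \<bar>x - z\<bar> = sqrt (lam j) * \<bar>x - z\<bar>\<close>, or by \<open>2 * (j * \<bar>x - z\<bar>) powr \<alpha>\<close> after interpolating
  with the trivial bound 2. The \<open>L\<^sup>1\<close> estimate follows from the \<open>L\<^sup>2\<close> one by Cauchy-Schwarz
  on \<open>(0, pi)\<close>, with \<open>C = 2 * sqrt pi\<close>.
\<close>

lemma phi_eq_cos: "phi j y = (if j = 0 then 1 / sqrt pi else sqrt (2 / pi)) * cos (real j * y)"
  by (simp add: phi_def)

lemma abs_phi_le_1: "\<bar>phi j y\<bar> \<le> 1"
proof -
  have "sqrt (2 / pi) \<le> 1" and "1 / sqrt pi \<le> 1"
    using pi_gt3 by (simp_all add: real_sqrt_le_1_iff divide_le_eq)
  then show ?thesis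
    by (auto simp: phi_eq_cos abs_mult intro: mult_le_one)
qed

lemma continuous_on_phi: "continuous_on A (phi j)"
  unfolding phi_eq_cos[abs_def] by (intro continuous_intros)

lemma abs_cos_diff_le: "\<bar>cos (a::real) - cos b\<bar> \<le> \<bar>a - b\<bar>"
proof -
  have "\<bar>cos a - cos b\<bar> = 2 * \<bar>sin ((a + b) / 2)\<bar> * \<bar>sin ((b - a) / 2)\<bar>"
    by (simp only: cos_diff_cos abs_mult)
  also have "\<dots> \<le> 2 * 1 * \<bar>(b - a) / 2\<bar>"
    by (intro mult_left_mono mult_mono abs_sin_x_le_abs_x abs_sin_le_one) auto
  finally show ?thesis by simp
qed

lemma phi_diff_lipschitz: "\<bar>phi j x - phi j z\<bar> \<le> real j * \<bar>x - z\<bar>"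
proof (cases "j = 0")
  case True
  then show ?thesis by (simp add: phi_def)
next
  case False
  have "sqrt (2 / pi) \<le> 1"
    using pi_gt3 by (simp add: real_sqrt_le_1_iff)
  have "\<bar>phi j x - phi j z\<bar> = sqrt (2 / pi) * \<bar>cos (real j * x) - cos (real j * z)\<bar>"
    using False by (simp add: phi_def abs_mult flip: right_diff_distrib)
  also have "\<dots> \<le> 1 * \<bar>real j * x - real j * z\<bar>"
    by (intro mult_mono abs_cos_diff_le) (use \<open>sqrt (2 / pi) \<le> 1\<close> in auto)
  finally show ?thesis by (simp add: abs_mult flip: right_diff_distrib)
qed

lemma phi_diff_holder:
  assumes "0 < \<alpha>" "\<alpha> \<le> 1"
  shows "\<bar>phi j x - phi j z\<bar> \<le> 2 * (real j * \<bar>x - z\<bar>) powr \<alpha>"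
proof (cases "real j * \<bar>x - z\<bar> \<ge> 1")
  case True
  then have "1 \<le> (real j * \<bar>x - z\<bar>) powr \<alpha>"
    using assms by (simp add: ge_one_powr_ge_zero)
  moreover have "\<bar>phi j x - phi j z\<bar> \<le> 2"
    using abs_phi_le_1[of j x] abs_phi_le_1[of j z] by linarith
  ultimately show ?thesis by linarith
next
  case False
  then have "real j * \<bar>x - z\<bar> \<le> (real j * \<bar>x - z\<bar>) powr \<alpha>"
    using assms powr_mono'[of \<alpha> 1 "real j * \<bar>x - z\<bar>"] by simp
  then show ?thesis
    using phi_diff_lipschitz[of j x z] by simp
qed

lemma integral_cos_int_mult:
  "integral {0..pi} (\<lambda>y. cos (of_int m * y)) = (if m = 0 then pi else 0)"
proof (cases "m = 0")
  case False
  have "((\<lambda>y. cos (of_int m * y)) has_integral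
          (sin (of_int m * pi) / of_int m - sin (of_int m * 0) / of_int m)) {0..pi}"
  proof (rule fundamental_theorem_of_calculus)
    fix y :: real
    have "((\<lambda>y. sin (of_int m * y) / of_int m) has_real_derivative
            (cos (of_int m * y) * of_int m / of_int m)) (at y within {0..pi})"
      by (auto intro!: derivative_eq_intros)
    then show "((\<lambda>y. sin (of_int m * y) / of_int m) has_vector_derivative cos (of_int m * y))
                 (at y within {0..pi})"
      using False by (simp add: has_real_derivative_iff_has_vector_derivative)
  qed simp
  moreover have "sin (of_int m * pi) = 0"
    by (auto simp: sin_zero_iff_int2)
  ultimately show ?thesis
    using False by (simp add: integral_unique)
qed simp

lemma integral_cos_mult_cos:
  "integral {0..pi} (\<lambda>y. cos (real j * y) * cos (real k * y)) =
     (if j = k then pi / 2 else 0) + (if j = 0 \<and> k = 0 then pi / 2 else 0)"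
proof -
  have product_to_sum: "cos (real j * y) * cos (real k * y) =
          cos ((real j - real k) * y) / 2 + cos ((real j + real k) * y) / 2" for y
    by (simp add: cos_times_cos add_divide_distrib left_diff_distrib distrib_right)
  have "integral {0..pi} (\<lambda>y. cos (real j * y) * cos (real k * y)) =
          integral {0..pi} (\<lambda>y. cos ((real j - real k) * y)) / 2
        + integral {0..pi} (\<lambda>y. cos ((real j + real k) * y)) / 2"
    unfolding product_to_sum
    by (subst integral_add) (auto intro!: integrable_continuous_real continuous_intros simp: integral_divide)
  with integral_cos_int_mult[of "int j - int k"] integral_cos_int_mult[of "int j + int k"]
  show ?thesis by simp
qed

lemma phi_orthonormal:
  "integral {0..pi} (\<lambda>y. phi j y * phi k y) = (if j = k then 1 else 0)"
proof -
  define a where "a j = (if j = 0 then 1 / sqrt pi else sqrt (2 / pi))" for j :: nat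
  have "(\<lambda>y. phi j y * phi k y) = (\<lambda>y. a j * a k * (cos (real j * y) * cos (real k * y)))"
    by (simp add: fun_eq_iff phi_eq_cos a_def)
  then have "integral {0..pi} (\<lambda>y. phi j y * phi k y) =
               a j * a k * ((if j = k then pi / 2 else 0) + (if j = 0 \<and> k = 0 then pi / 2 else 0))"
    by (simp only: integral_mult_right integral_cos_mult_cos)
  then show ?thesis
    by (simp add: a_def)
qed

lemma integral_square_phi_sum:
  "integral {0..pi} (\<lambda>y. (\<Sum>j<n. c j * phi j y)\<^sup>2) = (\<Sum>j<n. (c j)\<^sup>2)"
proof -
  have "(\<lambda>y. (\<Sum>j<n. c j * phi j y)\<^sup>2) = (\<lambda>y. \<Sum>i<n. \<Sum>j<n. c i * c j * (phi i y * phi j y))"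
    by (simp add: fun_eq_iff power2_eq_square sum_product mult_ac)
  then have "integral {0..pi} (\<lambda>y. (\<Sum>j<n. c j * phi j y)\<^sup>2) =
               (\<Sum>i<n. \<Sum>j<n. c i * c j * integral {0..pi} (\<lambda>y. phi i y * phi j y))"
    by (simp add: integral_sum integrable_continuous_real continuous_intros continuous_on_phi)
  also have "\<dots> = (\<Sum>j<n. (c j)\<^sup>2)"
    by (simp add: phi_orthonormal power2_eq_square if_distrib sum.delta cong: if_cong)
  finally show ?thesis .
qed

lemma summable_phi_series:
  assumes "summable (\<lambda>j. \<bar>c j\<bar>)"
  shows "summable (\<lambda>j. c j * phi j y)"
  by (rule summable_comparison_test'[OF assms, where N = 0])
     (simp add: abs_mult mult_left_le abs_phi_le_1)

lemma continuous_on_phi_series: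
  assumes "summable (\<lambda>j. \<bar>c j\<bar>)"
  shows "continuous_on A (\<lambda>y. \<Sum>j. c j * phi j y)"
proof (rule uniform_limit_theorem)
  show "uniform_limit A (\<lambda>n y. \<Sum>j<n. c j * phi j y) (\<lambda>y. \<Sum>j. c j * phi j y) sequentially"
    by (rule Weierstrass_m_test[OF _ assms]) (simp add: abs_mult mult_left_le abs_phi_le_1)
  show "\<forall>\<^sub>F n in sequentially. continuous_on A (\<lambda>y. \<Sum>j<n. c j * phi j y)"
    by (intro always_eventually allI continuous_intros continuous_on_phi)
qed simp

lemma integral_square_phi_series:
  assumes summable: "summable (\<lambda>j. \<bar>c j\<bar>)"
  shows "integral {0..pi} (\<lambda>y. (\<Sum>j. c j * phi j y)\<^sup>2) = (\<Sum>j. (c j)\<^sup>2)"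
proof -
  define M where "M = (\<Sum>j. \<bar>c j\<bar>)"
  have partial_sum_bound: "\<bar>\<Sum>j<n. c j * phi j y\<bar> \<le> M" for n y
  proof -
    have "\<bar>\<Sum>j<n. c j * phi j y\<bar> \<le> (\<Sum>j<n. \<bar>c j\<bar>)"
      by (rule order_trans[OF sum_abs sum_mono]) (simp add: abs_mult mult_left_le abs_phi_le_1)
    also have "\<dots> \<le> M"
      unfolding M_def by (rule sum_le_suminf[OF summable]) auto
    finally show ?thesis .
  qed
  have "(\<lambda>n. integral {0..pi} (\<lambda>y. (\<Sum>j<n. c j * phi j y)\<^sup>2))
          \<longlonglongrightarrow> integral {0..pi} (\<lambda>y. (\<Sum>j. c j * phi j y)\<^sup>2)"
  proof (rule dominated_convergence(2))
    show "(\<lambda>y. (\<Sum>j<n. c j * phi j y)\<^sup>2) integrable_on {0..pi}" for n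
      by (intro integrable_continuous_real continuous_intros continuous_on_phi)
    show "(\<lambda>y. M\<^sup>2) integrable_on {0..pi}"
      by (intro integrable_continuous_real continuous_intros)
    show "norm ((\<Sum>j<n. c j * phi j y)\<^sup>2) \<le> M\<^sup>2" for n y
      by (metis partial_sum_bound abs_ge_zero norm_power power_mono real_norm_def)
    show "(\<lambda>n. (\<Sum>j<n. c j * phi j y)\<^sup>2) \<longlonglongrightarrow> (\<Sum>j. c j * phi j y)\<^sup>2" for y
      by (intro tendsto_power summable_LIMSEQ summable_phi_series summable)
  qed
  moreover have "summable (\<lambda>j. (c j)\<^sup>2)"
  proof (rule summable_comparison_test'[OF summable_mult[OF summable, of M], where N = 0])
    fix j
    have "\<bar>c j\<bar> \<le> M"
      unfolding M_def using sum_le_suminf[OF summable, of "{j}"] by simp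
    then show "norm ((c j)\<^sup>2) \<le> M * \<bar>c j\<bar>"
      using mult_right_mono[of "\<bar>c j\<bar>" M "\<bar>c j\<bar>"] by (simp add: power2_eq_square)
  qed
  ultimately show ?thesis
    unfolding integral_square_phi_sum using LIMSEQ_unique summable_LIMSEQ by blast
qed

lemma integral_abs_le_sqrt_integral_square:
  fixes f :: "real \<Rightarrow> real"
  assumes "a < b" and cont: "continuous_on {a..b} f"
  shows "integral {a..b} (\<lambda>y. \<bar>f y\<bar>) \<le> sqrt ((b - a) * integral {a..b} (\<lambda>y. (f y)\<^sup>2))"
proof -
  define L where "L = integral {a..b} (\<lambda>y. \<bar>f y\<bar>)"
  define Q where "Q = integral {a..b} (\<lambda>y. (f y)\<^sup>2)"
  have AM_GM: "2 * e * L \<le> Q + (b - a) * e\<^sup>2" if "e > 0" for e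
  proof -
    have "2 * e * \<bar>f y\<bar> \<le> (f y)\<^sup>2 + e\<^sup>2" for y
      using sum_squares_bound[of "\<bar>f y\<bar>" e] by (simp add: power2_eq_square algebra_simps)
    then have "integral {a..b} (\<lambda>y. 2 * e * \<bar>f y\<bar>) \<le> integral {a..b} (\<lambda>y. (f y)\<^sup>2 + e\<^sup>2)"
      by (intro integral_le integrable_continuous_real continuous_intros cont) auto
    then show ?thesis
      using \<open>a < b\<close> by (simp add: L_def Q_def integral_add integrable_continuous_real continuous_intros cont)
  qed
  have square_bound: "L\<^sup>2 \<le> (b - a) * Q" if "L > 0"
  proof -
    have "2 * (L / (b - a)) * L \<le> Q + (b - a) * (L / (b - a))\<^sup>2"
      using AM_GM[of "L / (b - a)"] that \<open>a < b\<close> by simp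
    moreover have "2 * (L / (b - a)) * L = 2 * (L\<^sup>2 / (b - a))"
      and "(b - a) * (L / (b - a))\<^sup>2 = L\<^sup>2 / (b - a)"
      using \<open>a < b\<close> by (simp_all add: power2_eq_square)
    ultimately have "L\<^sup>2 / (b - a) \<le> Q"
      by linarith
    then show ?thesis
      using \<open>a < b\<close> by (simp add: pos_divide_le_eq mult.commute)
  qed
  have "0 \<le> sqrt ((b - a) * Q)"
    using \<open>a < b\<close> unfolding Q_def
    by (intro real_sqrt_ge_zero mult_nonneg_nonneg integral_nonneg integrable_continuous_real
        continuous_intros cont) auto
  then show ?thesis
    unfolding L_def[symmetric] Q_def[symmetric]
    by (meson not_less order.trans real_le_rsqrt square_bound)
qed

lemma set_integral_Odom:
  fixes g :: "real \<Rightarrow> real"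
  assumes "continuous_on {0..pi} g"
  shows "(LINT y:Odom|lborel. g y) = integral {0..pi} g"
proof -
  have "set_integrable lborel Odom g"
    using borel_integrable_atLeastAtMost'[OF assms]
    by (rule set_integrable_subset) (auto simp: Odom_def)
  then show ?thesis
    by (simp add: set_borel_integral_eq_integral Odom_def integral_open_interval_real)
qed

lemma summable_heat_weights:
  assumes "t > 0"
  shows "summable (\<lambda>j. lam j ^ k * exp (- ((lam j)\<^sup>2 * t)))"
    and "summable (\<lambda>j. lam j powr p * exp (- ((lam j)\<^sup>2 * t)))"
proof -
  have inverse_square: "summable (\<lambda>n. norm (1 / real n ^ 2))"
    using inverse_power_summable[of 2, where 'a = real] by (simp add: divide_inverse)
  show "summable (\<lambda>j. lam j ^ k * exp (- ((lam j)\<^sup>2 * t)))"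
    by (rule summable_comparison_test_bigo[OF inverse_square]) (unfold lam_def, use assms in real_asymp)
  show "summable (\<lambda>j. lam j powr p * exp (- ((lam j)\<^sup>2 * t)))"
    by (rule summable_comparison_test_bigo[OF inverse_square]) (unfold lam_def, use assms in real_asymp)
qed

lemma suminf_le_const_mult:
  fixes a b :: "nat \<Rightarrow> real"
  assumes "\<And>j. 0 \<le> a j" "\<And>j. a j \<le> K * b j" "summable b"
  shows "(\<Sum>j. a j) \<le> K * (\<Sum>j. b j)"
proof -
  have "summable a"
    by (rule summable_comparison_test'[OF summable_mult[OF \<open>summable b\<close>], where N = 0]) (use assms in auto)
  then show ?thesis
    using suminf_le[OF assms(2) _ summable_mult[OF \<open>summable b\<close>]] suminf_mult[OF \<open>summable b\<close>] by simp
qed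

definition spectral_kernel :: "(nat \<Rightarrow> real) \<Rightarrow> real \<Rightarrow> real \<Rightarrow> real" where
  "spectral_kernel w x y = (\<Sum>j. w j * phi j x * phi j y)"

lemma G_eq_spectral_kernel: "G t = spectral_kernel (\<lambda>j. exp (- ((lam j)\<^sup>2 * t)))"
  by (simp add: fun_eq_iff G_def spectral_kernel_def)

lemma DeltaG_eq_spectral_kernel:
  "DeltaG t x y = - spectral_kernel (\<lambda>j. lam j * exp (- ((lam j)\<^sup>2 * t))) x y"
  by (simp add: DeltaG_def spectral_kernel_def)

lemma spectral_kernel_diff:
  assumes "summable (\<lambda>j. \<bar>w j\<bar>)"
  shows "spectral_kernel w x y - spectral_kernel w z y = (\<Sum>j. w j * (phi j x - phi j z) * phi j y)"
proof -
  have summable_at: "summable (\<lambda>j. w j * phi j x * phi j y)" for x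
    by (rule summable_comparison_test'[OF assms, where N = 0])
       (simp add: abs_mult mult.assoc mult_left_le mult_le_one abs_phi_le_1)
  have "spectral_kernel w x y - spectral_kernel w z y
          = (\<Sum>j. w j * phi j x * phi j y - w j * phi j z * phi j y)"
    unfolding spectral_kernel_def by (rule suminf_diff[OF summable_at summable_at])
  then show ?thesis
    by (simp add: algebra_simps)
qed

lemma summable_abs_coeff_phi_diff:
  assumes "summable (\<lambda>j. \<bar>w j\<bar>)"
  shows "summable (\<lambda>j. \<bar>w j * (phi j x - phi j z)\<bar>)"
proof (rule summable_comparison_test'[OF summable_mult[OF assms, of 2], where N = 0])
  fix j
  have "\<bar>phi j x - phi j z\<bar> \<le> 2"
    using abs_phi_le_1[of j x] abs_phi_le_1[of j z] by linarith
  then show "norm \<bar>w j * (phi j x - phi j z)\<bar> \<le> 2 * \<bar>w j\<bar>"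
    by (simp add: abs_mult mult_left_mono mult.commute)
qed

lemma set_integral_square_spectral_kernel_diff:
  assumes "summable (\<lambda>j. \<bar>w j\<bar>)"
  shows "(LINT y:Odom|lborel. (spectral_kernel w x y - spectral_kernel w z y)\<^sup>2)
           = (\<Sum>j. (w j * (phi j x - phi j z))\<^sup>2)"
  using summable_abs_coeff_phi_diff[OF assms]
  by (simp add: spectral_kernel_diff[OF assms] set_integral_Odom continuous_intros
      continuous_on_phi_series integral_square_phi_series)

lemma set_integral_abs_spectral_kernel_diff_le:
  assumes "summable (\<lambda>j. \<bar>w j\<bar>)"
  shows "(LINT y:Odom|lborel. \<bar>spectral_kernel w x y - spectral_kernel w z y\<bar>)
           \<le> sqrt (pi * (\<Sum>j. (w j * (phi j x - phi j z))\<^sup>2))"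
  using summable_abs_coeff_phi_diff[OF assms]
    integral_abs_le_sqrt_integral_square[OF pi_gt_zero continuous_on_phi_series]
  by (simp add: spectral_kernel_diff[OF assms] set_integral_Odom continuous_intros
      continuous_on_phi_series integral_square_phi_series)

lemma heat_weight_square_le:
  assumes "j \<noteq> 0" "0 \<le> t"
  shows "(exp (- ((lam j)\<^sup>2 * t)))\<^sup>2 \<le> exp (- (lam 1 * t)) * exp (- ((lam j)\<^sup>2 * t))"
proof -
  have "1 \<le> (lam j)\<^sup>2"
    using assms by (simp add: lam_def)
  then have "exp (- ((lam j)\<^sup>2 * t)) \<le> exp (- (lam 1 * t))"
    using assms mult_right_mono[of 1 "(lam j)\<^sup>2" t] by (simp add: lam_def)
  then show ?thesis
    by (simp add: power2_eq_square)
qed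

lemma heat_coeff_square_le:
  assumes "0 \<le> t"
  shows "(exp (- ((lam j)\<^sup>2 * t)) * (phi j x - phi j z))\<^sup>2
           \<le> exp (- (lam 1 * t)) * \<bar>x - z\<bar>\<^sup>2 * (lam j * exp (- ((lam j)\<^sup>2 * t)))"
proof (cases "j = 0")
  case False
  have "(phi j x - phi j z)\<^sup>2 \<le> (real j * \<bar>x - z\<bar>)\<^sup>2"
    using phi_diff_lipschitz[of j x z] by (simp add: power_mono flip: abs_le_square_iff)
  then have "(exp (- ((lam j)\<^sup>2 * t)))\<^sup>2 * (phi j x - phi j z)\<^sup>2
               \<le> (exp (- (lam 1 * t)) * exp (- ((lam j)\<^sup>2 * t))) * (lam j * \<bar>x - z\<bar>\<^sup>2)"
    by (intro mult_mono heat_weight_square_le False assms) (simp_all add: lam_def power_mult_distrib)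
  then show ?thesis
    by (simp add: power_mult_distrib mult_ac)
qed (simp add: phi_def lam_def)

lemma laplacian_heat_coeff_square_le:
  assumes "0 \<le> t" "0 < \<alpha>" "\<alpha> \<le> 1"
  shows "(lam j * exp (- ((lam j)\<^sup>2 * t)) * (phi j x - phi j z))\<^sup>2
           \<le> 4 * exp (- (lam 1 * t)) * (\<bar>x - z\<bar> powr \<alpha>)\<^sup>2
              * (lam j powr (2 + \<alpha>) * exp (- ((lam j)\<^sup>2 * t)))"
proof (cases "j = 0")
  case False
  have "(phi j x - phi j z)\<^sup>2 \<le> (2 * (real j * \<bar>x - z\<bar>) powr \<alpha>)\<^sup>2"
    using power_mono[OF phi_diff_holder[OF assms(2,3), of j x z] abs_ge_zero, of 2] by simp
  also have "\<dots> = 4 * (\<bar>x - z\<bar> powr \<alpha>)\<^sup>2 * lam j powr \<alpha>"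
    using powr_mult[of "real j" "real j" \<alpha>] by (simp add: lam_def power2_eq_square powr_mult)
  finally have "(lam j)\<^sup>2 * (phi j x - phi j z)\<^sup>2 \<le> 4 * (\<bar>x - z\<bar> powr \<alpha>)\<^sup>2 * lam j powr (2 + \<alpha>)"
    using False by (simp add: lam_def powr_add mult_left_mono mult_ac)
  from mult_mono[OF heat_weight_square_le[OF False assms(1)] this] show ?thesis
    by (simp add: power_mult_distrib mult_ac)
qed (simp add: phi_def)

lemma G_diff_square_integral_le:
  assumes "t > 0"
  shows "(LINT y:Odom|lborel. (G t x y - G t z y)\<^sup>2)
           \<le> exp (- (lam 1 * t)) * (\<Sum>j. lam j * exp (- ((lam j)\<^sup>2 * t))) * \<bar>x - z\<bar>\<^sup>2"
proof -
  have "summable (\<lambda>j. \<bar>exp (- ((lam j)\<^sup>2 * t))\<bar>)"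
    using summable_heat_weights(1)[OF assms, of 0] by simp
  then have "(LINT y:Odom|lborel. (G t x y - G t z y)\<^sup>2)
               = (\<Sum>j. (exp (- ((lam j)\<^sup>2 * t)) * (phi j x - phi j z))\<^sup>2)"
    unfolding G_eq_spectral_kernel by (rule set_integral_square_spectral_kernel_diff)
  also have "\<dots> \<le> exp (- (lam 1 * t)) * \<bar>x - z\<bar>\<^sup>2 * (\<Sum>j. lam j * exp (- ((lam j)\<^sup>2 * t)))"
    using assms summable_heat_weights(1)[OF assms, of 1]
    by (intro suminf_le_const_mult heat_coeff_square_le) auto
  finally show ?thesis
    by (simp add: mult_ac)
qed

lemma DeltaG_diff_abs_integral_le:
  assumes "t > 0" "0 < \<alpha>" "\<alpha> \<le> 1"
  shows "(LINT y:Odom|lborel. \<bar>DeltaG t x y - DeltaG t z y\<bar>)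
           \<le> 2 * sqrt pi * exp (- (lam 1 / 2 * t)) * \<bar>x - z\<bar> powr \<alpha>
              * sqrt (\<Sum>j. lam j powr (2 + \<alpha>) * exp (- ((lam j)\<^sup>2 * t)))"
proof -
  define w where "w = (\<lambda>j. lam j * exp (- ((lam j)\<^sup>2 * t)))"
  define S where "S = (\<Sum>j. lam j powr (2 + \<alpha>) * exp (- ((lam j)\<^sup>2 * t)))"
  have summable_w: "summable (\<lambda>j. \<bar>w j\<bar>)"
    using summable_heat_weights(1)[OF assms(1), of 1] by (simp add: w_def abs_mult lam_def)
  have "(LINT y:Odom|lborel. \<bar>DeltaG t x y - DeltaG t z y\<bar>)
          = (LINT y:Odom|lborel. \<bar>spectral_kernel w x y - spectral_kernel w z y\<bar>)"
    by (simp add: DeltaG_eq_spectral_kernel w_def abs_minus_commute)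
  also have "\<dots> \<le> sqrt (pi * (\<Sum>j. (w j * (phi j x - phi j z))\<^sup>2))"
    by (rule set_integral_abs_spectral_kernel_diff_le[OF summable_w])
  also have "\<dots> \<le> sqrt (pi * (4 * exp (- (lam 1 * t)) * (\<bar>x - z\<bar> powr \<alpha>)\<^sup>2 * S))"
    unfolding S_def w_def using assms summable_heat_weights(2)[OF assms(1), of "2 + \<alpha>"]
    by (intro real_sqrt_le_mono mult_left_mono suminf_le_const_mult laplacian_heat_coeff_square_le) auto
  also have "\<dots> = 2 * sqrt pi * exp (- (lam 1 / 2 * t)) * \<bar>x - z\<bar> powr \<alpha> * sqrt S"
  proof -
    have "exp (- (lam 1 * t)) = (exp (- (lam 1 / 2 * t)))\<^sup>2"
      by (simp add: power2_eq_square flip: exp_add)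
    then show ?thesis
      by (simp add: real_sqrt_mult)
  qed
  finally show ?thesis
    unfolding S_def .
qed

theorem lemma3p1:
  shows "(\<forall>t>0. \<forall>x\<in>Odom. \<forall>z\<in>Odom.
            (LINT y:Odom|lborel. (G t x y - G t z y)\<^sup>2)
              \<le> exp (- (lam 1 * t)) * (\<Sum>j. lam j * exp (- ((lam j)\<^sup>2 * t))) * \<bar>x - z\<bar>\<^sup>2)
       \<and> (\<forall>\<alpha>::real. 0 < \<alpha> \<and> \<alpha> < 1 \<longrightarrow>
            (\<exists>C>0. \<forall>t>0. \<forall>x\<in>Odom. \<forall>z\<in>Odom.
               (LINT y:Odom|lborel. \<bar>DeltaG t x y - DeltaG t z y\<bar>)
                 \<le> C * exp (- (lam 1 / 2 * t)) * \<bar>x - z\<bar> powr \<alpha>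
                   * sqrt (\<Sum>j. lam j powr (2 + \<alpha>) * exp (- ((lam j)\<^sup>2 * t)))))"
proof (intro conjI allI impI ballI)
  fix \<alpha> :: real
  assume "0 < \<alpha> \<and> \<alpha> < 1"
  then show "\<exists>C>0. \<forall>t>0. \<forall>x\<in>Odom. \<forall>z\<in>Odom.
               (LINT y:Odom|lborel. \<bar>DeltaG t x y - DeltaG t z y\<bar>)
                 \<le> C * exp (- (lam 1 / 2 * t)) * \<bar>x - z\<bar> powr \<alpha>
                   * sqrt (\<Sum>j. lam j powr (2 + \<alpha>) * exp (- ((lam j)\<^sup>2 * t)))"
    by (intro exI[of _ "2 * sqrt pi"] conjI allI impI ballI DeltaG_diff_abs_integral_le) auto
qed (rule G_diff_square_integral_le)

end
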